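(* Let $w\ge 2$, $h\ge 3$ and $G=P_w(U)\sqcap C_h$ with $U=\{i,j\}$ for distinct $i,j\in\{1,\dots,w\}$. Then $Z(G)\le h$.
   Context: All graphs are finite, simple and undirected. Zero forcing: given a graph $G$ and a set $S\subseteq V(G)$ of initially filled vertices, the color change rule says that if a filled vertex $v$ has exactly one unfilled neighbor $u$, then $v$ forces $u$ to become filled. $S$ is a zero forcing set if repeatedly applying this rule eventually fills every vertex of $G$. The zero forcing number $Z(G)$ is the minimum cardinality of a zero forcing set of $G$. The path $P_n$ has vertex set $\{1,\dots,n\}$ and edges $\{k,k+1\}$ for $1\le k\le n-1$; the cycle $C_n$ ($n\ge3$) has vertex set $\{1,\dots,n\}$ and edges $\{k,k+1\}$ for $1\le k\le n-1$ together with $\{n,1\}$. Generalized hierarchical product: for graphs $W,H$ and $U\subseteq V(W)$ (the root set), $W(U)\sqcap H$ is the graph with vertex set $V(W)\times V(H)$ in which $(x_1,y_1)$ and $(x_2,y_2)$ are adjacent iff either ($x_1=x_2\in U$ and $y_1y_2\in E(H)$) or ($y_1=y_2$ and $x_1x_2\in E(W)$). *)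

theory Defs
  imports Main
begin

text \<open>A finite simple graph is represented by a vertex set V and an adjacency
  relation E (assumed symmetric, irreflexive, within V for the concrete graphs below).\<close>

definition path_adj :: "nat \<Rightarrow> nat \<Rightarrow> nat \<Rightarrow> bool" where
  "path_adj n a b \<longleftrightarrow> a \<in> {1..n} \<and> b \<in> {1..n} \<and> (b = a + 1 \<or> a = b + 1)"

definition cycle_adj :: "nat \<Rightarrow> nat \<Rightarrow> nat \<Rightarrow> bool" where
  "cycle_adj n a b \<longleftrightarrow> a \<in> {1..n} \<and> b \<in> {1..n} \<and>
     (b = a + 1 \<or> a = b + 1 \<or> (a = n \<and> b = 1) \<or> (a = 1 \<and> b = n))"

definition hprod_adj ::
  "('a \<Rightarrow> 'a \<Rightarrow> bool) \<Rightarrow> 'a set \<Rightarrow> ('b \<Rightarrow> 'b \<Rightarrow> bool) \<Rightarrow> 'a \<times> 'b \<Rightarrow> 'a \<times> 'b \<Rightarrow> bool" where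
  "hprod_adj EW U EH p q \<longleftrightarrow>
     (fst p = fst q \<and> fst p \<in> U \<and> EH (snd p) (snd q)) \<or>
     (snd p = snd q \<and> EW (fst p) (fst q))"

inductive filled :: "'v set \<Rightarrow> ('v \<Rightarrow> 'v \<Rightarrow> bool) \<Rightarrow> 'v set \<Rightarrow> 'v \<Rightarrow> bool"
  for V E S where
  init: "x \<in> S \<Longrightarrow> filled V E S x"
| force: "\<lbrakk> v \<in> V; u \<in> V; filled V E S v; E v u;
           \<And>w. \<lbrakk> w \<in> V; E v w; w \<noteq> u \<rbrakk> \<Longrightarrow> filled V E S w \<rbrakk>
         \<Longrightarrow> filled V E S u"

definition zero_forcing_set :: "'v set \<Rightarrow> ('v \<Rightarrow> 'v \<Rightarrow> bool) \<Rightarrow> 'v set \<Rightarrow> bool" where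
  "zero_forcing_set V E S \<longleftrightarrow> S \<subseteq> V \<and> (\<forall>x\<in>V. filled V E S x)"

definition zero_forcing_number :: "'v set \<Rightarrow> ('v \<Rightarrow> 'v \<Rightarrow> bool) \<Rightarrow> nat" where
  "zero_forcing_number V E = Min (card ` {S. zero_forcing_set V E S})"

end

theory Submission
  imports Defs
begin

text \<open>The first layer \<open>{1} \<times> V(H)\<close> of any product \<open>P\<^sub>w(U) \<sqinter> H\<close> is a zero forcing set:
  once layers \<open>1, \<dots>, n\<close> are filled, every vertex \<open>(n, y)\<close> has \<open>(n + 1, y)\<close> as its only
  neighbour outside these layers, whatever the root set \<open>U\<close> and the graph \<open>H\<close> are.\<close>

lemma zero_forcing_number_le_card:
  assumes "finite V" and "zero_forcing_set V E S"
  shows "zero_forcing_number V E \<le> card S"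
proof -
  have "{S. zero_forcing_set V E S} \<subseteq> Pow V"
    by (auto simp: zero_forcing_set_def)
  then have "finite (card ` {S. zero_forcing_set V E S})"
    using \<open>finite V\<close> by (meson finite_Pow_iff finite_subset finite_imageI)
  then show ?thesis
    unfolding zero_forcing_number_def using assms(2) by (intro Min_le) auto
qed

lemma hprod_path_adj_fst_le:
  assumes "hprod_adj (path_adj w) U EH (n, y) (a, b)"
  shows "a \<le> n + 1 \<and> (a = n + 1 \<longrightarrow> b = y)"
  using assms by (auto simp: hprod_adj_def path_adj_def)

lemma hprod_path_filled_layers:
  assumes "n \<le> w" and "x \<in> {1..n}" and "y \<in> VH"
  shows "filled ({1..w} \<times> VH) (hprod_adj (path_adj w) U EH) ({1} \<times> VH) (x, y)"
  using assms
proof (induction n arbitrary: x y)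
  case 0
  then show ?case by simp
next
  case (Suc n)
  let ?V = "{1..w} \<times> VH" and ?E = "hprod_adj (path_adj w) U EH"
  show ?case
  proof (cases "x \<le> n")
    case True
    with Suc show ?thesis by auto
  next
    case False
    then have x: "x = Suc n" using Suc.prems by simp
    show ?thesis
    proof (cases "n = 0")
      case True
      with x Suc.prems show ?thesis by (auto intro: filled.init)
    next
      case False
      show ?thesis unfolding x
      proof (rule filled.force[where v = "(n, y)"])
        show "(n, y) \<in> ?V" and "(Suc n, y) \<in> ?V"
          using False Suc.prems by auto
        show "filled ?V ?E ({1} \<times> VH) (n, y)"
          using Suc.IH False Suc.prems by simp
        show "?E (n, y) (Suc n, y)"
          using False Suc.prems by (auto simp: hprod_adj_def path_adj_def)
        fix q assume q: "q \<in> ?V" "?E (n, y) q" "q \<noteq> (Suc n, y)"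
        obtain a b where ab: "q = (a, b)" by (cases q)
        have "a \<le> n" using hprod_path_adj_fst_le[of w U EH n y a b] q ab by auto
        then show "filled ?V ?E ({1} \<times> VH) q"
          using Suc.IH[of a b] Suc.prems q ab by auto
      qed
    qed
  qed
qed

lemma hprod_path_first_layer_zero_forcing:
  assumes "w \<ge> 1"
  shows "zero_forcing_set ({1..w} \<times> VH) (hprod_adj (path_adj w) U EH) ({1} \<times> VH)"
  unfolding zero_forcing_set_def
  using assms hprod_path_filled_layers[of w w _ _ VH U EH] by auto

theorem mainTheorem9:
  fixes w h i j :: nat
  assumes "w \<ge> 2" and "h \<ge> 3"
    and "i \<in> {1..w}" and "j \<in> {1..w}" and "i \<noteq> j"
  shows "zero_forcing_number ({1..w} \<times> {1..h})
           (hprod_adj (path_adj w) {i, j} (cycle_adj h)) \<le> h"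
proof -
  have "zero_forcing_set ({1..w} \<times> {1..h}) (hprod_adj (path_adj w) {i, j} (cycle_adj h))
          ({1} \<times> {1..h})"
    using assms(1) by (intro hprod_path_first_layer_zero_forcing) simp
  then have "zero_forcing_number ({1..w} \<times> {1..h})
               (hprod_adj (path_adj w) {i, j} (cycle_adj h)) \<le> card ({1::nat} \<times> {1..h})"
    by (intro zero_forcing_number_le_card) simp_all
  then show ?thesis by (simp add: card_cartesian_product)
qed

end
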